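(* Let $S$ be an entropy function for a finite set $X$, let $X'\subset X$, and let $S'$ be the restriction of $S$ to subsets of $X'$. Then $F_{S'}$ equals the image of $F_S$ under the coordinate projection $\mathbb R^X\to\mathbb R^{X'}$.
   Context: An entropy function for a finite set $X$ is a function $S:2^X\to[0,\infty)$ with $S(\emptyset)=0$, $S(A)+S(B)\ge S(A\cap B)+S(A\cup B)$ and $S(A)+S(B)\ge S(A\setminus B)+S(B\setminus A)$ for all $A,B\subseteq X$. An entanglement distribution function (EDF) for $S$ is a function $f:X\to\mathbb R$ (a vector in $\mathbb R^X$) with $\big|\sum_{x\in A}f(x)\big|\le S(A)$ for all $A\subseteq X$; $F_S\subseteq\mathbb R^X$ denotes the set of all EDFs for $S$ (the entropohedron). *)

theory Defs
  imports "HOL-Analysis.Analysis"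
begin

definition entropy_function :: "'a set \<Rightarrow> ('a set \<Rightarrow> real) \<Rightarrow> bool" where
  "entropy_function X S \<longleftrightarrow> finite X \<and> S {} = 0 \<and>
     (\<forall>A. A \<subseteq> X \<longrightarrow> S A \<ge> 0) \<and>
     (\<forall>A B. A \<subseteq> X \<longrightarrow> B \<subseteq> X \<longrightarrow> S A + S B \<ge> S (A \<inter> B) + S (A \<union> B)) \<and>
     (\<forall>A B. A \<subseteq> X \<longrightarrow> B \<subseteq> X \<longrightarrow> S A + S B \<ge> S (A - B) + S (B - A))"

text \<open>Vectors in R^X are represented as functions 'a => real vanishing outside X
  (i.e. extensional functions on X). The entropohedron F_S:\<close>
definition entropohedron :: "'a set \<Rightarrow> ('a set \<Rightarrow> real) \<Rightarrow> ('a \<Rightarrow> real) set" where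
  "entropohedron X S = {f. (\<forall>x. x \<notin> X \<longrightarrow> f x = 0) \<and>
      (\<forall>A. A \<subseteq> X \<longrightarrow> \<bar>\<Sum>x\<in>A. f x\<bar> \<le> S A)}"

definition coord_proj :: "'a set \<Rightarrow> ('a \<Rightarrow> real) \<Rightarrow> ('a \<Rightarrow> real)" where
  "coord_proj X' f = (\<lambda>x. if x \<in> X' then f x else 0)"

end

theory Submission
  imports Defs
begin

text \<open>Restricting an EDF to \<open>X'\<close> obviously gives an EDF, so the content is the converse:
  every EDF on \<open>X'\<close> extends to \<open>X\<close>. It is extended one point \<open>z\<close> at a time. Writing
  \<open>f A\<close> for the sum of \<open>f\<close> over \<open>A\<close>, the new value \<open>t = f z\<close> must satisfy
  \<open>- S (A \<union> {z}) - f A \<le> t \<le> S (B \<union> {z}) - f B\<close> for all \<open>A, B \<subseteq> X'\<close>,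
  and such a \<open>t\<close> exists because
  \<open>f B - f A = f (B - A) - f (A - B) \<le> S (B - A) + S (A - B) \<le> S (B \<union> {z}) + S (A \<union> {z})\<close>,
  the last step being the second entropy inequality applied to \<open>B \<union> {z}\<close> and \<open>A \<union> {z}\<close>.\<close>

lemma coord_proj_entropohedron: "f \<in> entropohedron Y S \<Longrightarrow> coord_proj Y f = f"
  unfolding entropohedron_def coord_proj_def by (auto simp: fun_eq_iff)

lemma coord_proj_coord_proj: "Y \<subseteq> Z \<Longrightarrow> coord_proj Y (coord_proj Z f) = coord_proj Y f"
  unfolding coord_proj_def by (auto simp: fun_eq_iff)

lemma coord_proj_image_entropohedron_subset:
  assumes "Y \<subseteq> Z"
  shows "coord_proj Y ` entropohedron Z S \<subseteq> entropohedron Y S"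
proof
  fix h assume "h \<in> coord_proj Y ` entropohedron Z S"
  then obtain f where f: "f \<in> entropohedron Z S" and h: "h = coord_proj Y f" by auto
  have "\<bar>sum h A\<bar> \<le> S A" if A: "A \<subseteq> Y" for A
  proof -
    have "sum h A = sum f A" using A h unfolding coord_proj_def by (intro sum.cong) auto
    then show ?thesis using f A assms unfolding entropohedron_def by auto
  qed
  moreover have "h x = 0" if "x \<notin> Y" for x using that h unfolding coord_proj_def by auto
  ultimately show "h \<in> entropohedron Y S" unfolding entropohedron_def by auto
qed

lemma entropohedron_insertI:
  assumes fin: "finite Y" and z: "z \<notin> Y" and f: "f \<in> entropohedron Y S"
    and t: "\<And>B. B \<subseteq> Y \<Longrightarrow> \<bar>t + sum f B\<bar> \<le> S (insert z B)"
  shows "f(z := t) \<in> entropohedron (insert z Y) S"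
  unfolding entropohedron_def
proof (intro CollectI conjI allI impI)
  fix x assume "x \<notin> insert z Y"
  then show "(f(z := t)) x = 0" using f unfolding entropohedron_def by auto
next
  fix A assume A: "A \<subseteq> insert z Y"
  show "\<bar>sum (f(z := t)) A\<bar> \<le> S A"
  proof (cases "z \<in> A")
    case False
    then have "A \<subseteq> Y" using A by auto
    moreover have "sum (f(z := t)) A = sum f A" using False by (intro sum.cong) auto
    ultimately show ?thesis using f unfolding entropohedron_def by auto
  next
    case True
    define B where "B = A - {z}"
    have B: "B \<subseteq> Y" and A_eq: "A = insert z B" using A True unfolding B_def by auto
    have "z \<notin> B" "finite B" using B z fin finite_subset by auto
    moreover have "sum (f(z := t)) B = sum f B" using \<open>z \<notin> B\<close> by (intro sum.cong) auto
    ultimately have "sum (f(z := t)) A = t + sum f B" unfolding A_eq by simp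
    then show ?thesis using t[OF B] A_eq by simp
  qed
qed

lemma entropohedron_extend_point:
  assumes fin: "finite Y" and z: "z \<notin> Y"
    and diff: "\<And>A B. A \<subseteq> insert z Y \<Longrightarrow> B \<subseteq> insert z Y \<Longrightarrow>
                 S (A - B) + S (B - A) \<le> S A + S B"
  shows "entropohedron Y S \<subseteq> coord_proj Y ` entropohedron (insert z Y) S"
proof
  fix f assume f: "f \<in> entropohedron Y S"
  have bound: "\<bar>sum f A\<bar> \<le> S A" if "A \<subseteq> Y" for A
    using f that unfolding entropohedron_def by auto
  define t where "t = (MAX C \<in> Pow Y. - S (insert z C) - sum f C)"
  have lower: "- S (insert z C) - sum f C \<le> t" if "C \<subseteq> Y" for C
    unfolding t_def using that fin by (intro Max_ge) auto
  have gap: "- S (insert z C) - sum f C \<le> S (insert z B) - sum f B"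
    if B: "B \<subseteq> Y" and C: "C \<subseteq> Y" for B C
  proof -
    have "finite B" "finite C" using B C fin finite_subset by auto
    then have "sum f B = sum f (B - C) + sum f (B \<inter> C)"
      and "sum f C = sum f (C - B) + sum f (B \<inter> C)"
      by (metis add.commute sum.Int_Diff, metis Int_commute add.commute sum.Int_Diff)
    then have "sum f B - sum f C = sum f (B - C) - sum f (C - B)" by simp
    also have "\<dots> \<le> S (B - C) + S (C - B)"
      using bound[of "B - C"] bound[of "C - B"] B C
      by (simp add: Diff_subset_conv abs_le_iff le_supI2)
    also have "\<dots> \<le> S (insert z B) + S (insert z C)"
    proof -
      have "insert z B - insert z C = B - C" "insert z C - insert z B = C - B"
        using B C z by auto
      then show ?thesis using diff[of "insert z B" "insert z C"] B C by auto
    qed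
    finally show ?thesis by linarith
  qed
  have upper: "t \<le> S (insert z B) - sum f B" if "B \<subseteq> Y" for B
    unfolding t_def using fin that gap by (subst Max_le_iff) auto
  have "\<bar>t + sum f B\<bar> \<le> S (insert z B)" if "B \<subseteq> Y" for B
    using lower[OF that] upper[OF that] by (simp add: abs_le_iff)
  then have "f(z := t) \<in> entropohedron (insert z Y) S"
    by (rule entropohedron_insertI[OF fin z f])
  moreover have "coord_proj Y (f(z := t)) = coord_proj Y f"
    using z unfolding coord_proj_def by (auto simp: fun_eq_iff)
  ultimately have "f(z := t) \<in> entropohedron (insert z Y) S \<and> f = coord_proj Y (f(z := t))"
    using coord_proj_entropohedron[OF f] by simp
  then show "f \<in> coord_proj Y ` entropohedron (insert z Y) S" by blast
qed

lemma entropohedron_subset_coord_proj_image: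
  assumes S: "entropy_function X S" and "Y \<subseteq> Z" "Z \<subseteq> X"
  shows "entropohedron Y S \<subseteq> coord_proj Y ` entropohedron Z S"
proof -
  have finX: "finite X" using S unfolding entropy_function_def by blast
  have diff: "S (A - B) + S (B - A) \<le> S A + S B" if "A \<subseteq> X" "B \<subseteq> X" for A B
    using S that unfolding entropy_function_def by blast
  have "Y \<union> D \<subseteq> X \<Longrightarrow> entropohedron Y S \<subseteq> coord_proj Y ` entropohedron (Y \<union> D) S"
    if "finite D" for D
    using that
  proof (induction D rule: finite_induct)
    case empty
    have "f \<in> coord_proj Y ` entropohedron Y S" if "f \<in> entropohedron Y S" for f
      using that coord_proj_entropohedron[OF that] by (metis image_eqI)
    then show ?case by auto
  next
    case (insert z D)
    show ?case
    proof (cases "z \<in> Y \<union> D")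
      case True
      then have "Y \<union> insert z D = Y \<union> D" by auto
      then show ?thesis using insert.IH insert.prems by simp
    next
      case False
      have YD: "Y \<union> D \<subseteq> X" and zYD: "insert z (Y \<union> D) \<subseteq> X"
        using insert.prems by auto
      have "finite (Y \<union> D)" using finX YD by (rule finite_subset[rotated])
      then have step: "entropohedron (Y \<union> D) S
                       \<subseteq> coord_proj (Y \<union> D) ` entropohedron (insert z (Y \<union> D)) S"
        using False by (rule entropohedron_extend_point) (meson diff subset_trans zYD)
      have "entropohedron Y S \<subseteq> coord_proj Y ` entropohedron (Y \<union> D) S"
        using insert.IH[OF YD] .
      also have "\<dots> \<subseteq> coord_proj Y ` coord_proj (Y \<union> D) ` entropohedron (Y \<union> insert z D) S"
        using step by (intro image_mono) simp
      also have "\<dots> = coord_proj Y ` entropohedron (Y \<union> insert z D) S"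
        by (simp add: image_image coord_proj_coord_proj)
      finally show ?thesis .
    qed
  qed
  moreover have "finite (Z - Y)" using finX assms finite_subset by blast
  moreover have "Y \<union> (Z - Y) = Z" using assms by auto
  ultimately show ?thesis using assms by (metis Un_absorb1)
qed

theorem corollary22:
  fixes X X' :: "'a set" and S :: "'a set \<Rightarrow> real"
  assumes "entropy_function X S"
    and "X' \<subset> X"
  shows "entropohedron X' S = coord_proj X' ` entropohedron X S"
proof (rule equalityI)
  show "entropohedron X' S \<subseteq> coord_proj X' ` entropohedron X S"
    using assms by (intro entropohedron_subset_coord_proj_image) auto
  show "coord_proj X' ` entropohedron X S \<subseteq> entropohedron X' S"
    using assms(2) by (intro coord_proj_image_entropohedron_subset) auto
qed

end
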